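(* Let $\Theta$ be a parameter space, $p(\theta)$ a prior on $\Theta$, $D=\{(y_i,x_i)\}_{i=1}^n$ a fixed dataset with likelihood $p(D\mid\theta)=\prod_{i=1}^n p(y_i\mid x_i,\theta)$, and $\nu$ the data-generating distribution on $\mathcal Y\times\mathcal X$. For $\lambda>0$ let $p_\lambda(\theta\mid D)\propto p(D\mid\theta)^\lambda p(\theta)$ be the tempered posterior, let $B(\rho)=\mathbb{E}_{(y,x)\sim\nu}\big[-\ln \mathbb{E}_{\theta\sim\rho}[p(y\mid x,\theta)]\big]$ be the Bayes loss and $\hat G(\rho,D)=\mathbb{E}_{\theta\sim\rho}[-\ln p(D\mid\theta)]$ the empirical Gibbs loss of a distribution $\rho$ on $\Theta$. If $\frac{d}{d\lambda}B(p_\lambda)\big|_{\lambda=1}<0$ (the cold posterior effect), then \[ \hat G(p_{1},D) > \min_{\theta} -\ln p(D\mid\theta). \]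
   Context: The tempered posterior is assumed to be a proper distribution. $p_1$ denotes $p_\lambda$ at $\lambda=1$, i.e. the standard Bayesian posterior. *)

theory Defs
  imports "HOL-Probability.Probability"
begin

definition data_lik :: "('y \<Rightarrow> 'x \<Rightarrow> 'th \<Rightarrow> real) \<Rightarrow> nat \<Rightarrow> (nat \<Rightarrow> 'y) \<Rightarrow> (nat \<Rightarrow> 'x) \<Rightarrow> 'th \<Rightarrow> real"
  where "data_lik lik n ys xs \<theta> = (\<Prod>i<n. lik (ys i) (xs i) \<theta>)"

definition temp_norm :: "'th measure \<Rightarrow> ('th \<Rightarrow> real) \<Rightarrow> real \<Rightarrow> real"
  where "temp_norm prior L l = (\<integral>\<theta>. L \<theta> powr l \<partial>prior)"

definition tempered_post :: "'th measure \<Rightarrow> ('th \<Rightarrow> real) \<Rightarrow> real \<Rightarrow> 'th measure"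
  where "tempered_post prior L l =
     density prior (\<lambda>\<theta>. ennreal (L \<theta> powr l / temp_norm prior L l))"

definition bayes_loss :: "('y \<times> 'x) measure \<Rightarrow> ('y \<Rightarrow> 'x \<Rightarrow> 'th \<Rightarrow> real) \<Rightarrow> 'th measure \<Rightarrow> real"
  where "bayes_loss \<nu> lik \<rho> = (\<integral>(y, x). - ln (\<integral>\<theta>. lik y x \<theta> \<partial>\<rho>) \<partial>\<nu>)"

definition emp_gibbs_loss :: "('th \<Rightarrow> real) \<Rightarrow> 'th measure \<Rightarrow> real"
  where "emp_gibbs_loss L \<rho> = (\<integral>\<theta>. - ln (L \<theta>) \<partial>\<rho>)"

definition neg_log_lik :: "('th \<Rightarrow> real) \<Rightarrow> 'th \<Rightarrow> ereal"
  where "neg_log_lik L \<theta> = (if L \<theta> = 0 then \<infinity> else ereal (- ln (L \<theta>)))"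

end

theory Submission
  imports Defs
begin

text \<open>The empirical Gibbs loss of \<open>p\<^sub>1\<close> is the \<open>p\<^sub>1\<close>-average of \<open>- ln p(D | \<theta>)\<close>, so it is
  at least the infimum. Equality forces \<open>p(D | \<theta>)\<close> to be a constant \<open>c\<close> almost everywhere on
  the support of \<open>p\<^sub>1\<close>. But then \<open>p(D | \<theta>)\<^sup>\<lambda> = c\<^sup>\<lambda>\<^sup>-\<^sup>1 p(D | \<theta>)\<close> for all \<open>\<lambda>\<close>, so every tempered
  posterior equals \<open>p\<^sub>1\<close>, the Bayes loss \<open>B(p\<^sub>\<lambda>)\<close> does not depend on \<open>\<lambda>\<close>, and its derivative at
  \<open>\<lambda> = 1\<close> vanishes, contradicting the cold posterior effect.\<close>

lemma (in prob_space) AE_eq_if_integral_le_lower_bound: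
  fixes f :: "'a \<Rightarrow> real"
  assumes f: "integrable M f"
    and lower: "AE x in M. c \<le> f x"
    and le: "integral\<^sup>L M f \<le> c"
  shows "AE x in M. f x = c"
proof -
  have int: "integrable M (\<lambda>x. f x - c)" using f by simp
  have nonneg: "AE x in M. 0 \<le> f x - c" using lower by eventually_elim simp
  have "integral\<^sup>L M (\<lambda>x. f x - c) = integral\<^sup>L M f - c"
    using f by (simp add: prob_space)
  with le integral_nonneg_AE[OF nonneg] have "integral\<^sup>L M (\<lambda>x. f x - c) = 0" by simp
  then have "AE x in M. f x - c = 0" using integral_nonneg_eq_0_iff_AE[OF int nonneg] by simp
  then show ?thesis by simp
qed

lemma prob_space_tempered_post:
  assumes "integrable M (\<lambda>\<theta>. L \<theta> powr l)" and "temp_norm M L l > 0"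
  shows "prob_space (tempered_post M L l)"
proof
  let ?Z = "temp_norm M L l"
  have "emeasure (tempered_post M L l) (space (tempered_post M L l))
      = (\<integral>\<^sup>+ \<theta>. ennreal (L \<theta> powr l / ?Z) \<partial>M)"
    using assms by (simp add: tempered_post_def emeasure_density nn_integral_set_ennreal[symmetric])
  also have "\<dots> = ennreal (\<integral>\<theta>. L \<theta> powr l / ?Z \<partial>M)"
    using assms by (intro nn_integral_eq_integral) auto
  also have "\<dots> = 1"
    using assms(2) by (simp add: temp_norm_def)
  finally show "emeasure (tempered_post M L l) (space (tempered_post M L l)) = 1" .
qed

lemma AE_tempered_post:
  assumes "L \<in> borel_measurable M" and "temp_norm M L l > 0"
  shows "(AE \<theta> in tempered_post M L l. P \<theta>) \<longleftrightarrow> (AE \<theta> in M. L \<theta> \<noteq> 0 \<longrightarrow> P \<theta>)"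
proof -
  have "0 < ennreal (L \<theta> powr l / temp_norm M L l) \<longleftrightarrow> L \<theta> \<noteq> 0" for \<theta>
    using assms(2) by (auto simp: zero_less_divide_iff)
  then show ?thesis
    unfolding tempered_post_def using assms(1) by (subst AE_density) auto
qed

lemma tempered_post_two_valued_lik:
  assumes L: "L \<in> borel_measurable M"
    and two_valued: "AE \<theta> in M. L \<theta> = 0 \<or> L \<theta> = c" and "c > 0"
  shows "tempered_post M L l = tempered_post M L 1"
proof -
  have scale: "AE \<theta> in M. L \<theta> powr m = c powr (m - 1) * L \<theta>" for m
    using two_valued by eventually_elim (use \<open>c > 0\<close> in \<open>auto simp: powr_diff\<close>)
  have norm: "temp_norm M L m = c powr (m - 1) * integral\<^sup>L M L" for m
    unfolding temp_norm_def using L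
    by (subst integral_cong_AE[OF _ _ scale]) (auto simp: integral_mult_left_zero)
  have "AE \<theta> in M. L \<theta> powr l / temp_norm M L l = L \<theta> powr 1 / temp_norm M L 1"
    using scale[of l] scale[of 1] by eventually_elim (use \<open>c > 0\<close> in \<open>simp add: norm\<close>)
  then show ?thesis
    unfolding tempered_post_def using L by (intro density_cong) (auto elim!: eventually_mono)
qed

theorem proposition2p2:
  fixes prior :: "'th measure"
    and \<nu> :: "('y \<times> 'x) measure"
    and lik :: "'y \<Rightarrow> 'x \<Rightarrow> 'th \<Rightarrow> real"
    and n :: nat and ys :: "nat \<Rightarrow> 'y" and xs :: "nat \<Rightarrow> 'x"
    and d :: real
  defines "L \<equiv> data_lik lik n ys xs"
  assumes prior: "prob_space prior"
    and nu: "prob_space \<nu>"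
    and lik_nonneg: "\<And>y x \<theta>. lik y x \<theta> \<ge> 0"
    and lik_meas: "\<And>y x. (\<lambda>\<theta>. lik y x \<theta>) \<in> borel_measurable prior"
    and proper: "\<And>l. l > 0 \<Longrightarrow>
        integrable prior (\<lambda>\<theta>. L \<theta> powr l) \<and> temp_norm prior L l > 0"
    and gibbs_defined: "integrable (tempered_post prior L 1) (\<lambda>\<theta>. - ln (L \<theta>))"
    and cold: "((\<lambda>l. bayes_loss \<nu> lik (tempered_post prior L l)) has_real_derivative d) (at 1)"
    and neg: "d < 0"
  shows "ereal (emp_gibbs_loss L (tempered_post prior L 1))
           > (INF \<theta>\<in>space prior. neg_log_lik L \<theta>)"
proof (rule ccontr)
  define p1 where "p1 = tempered_post prior L 1"
  define G where "G = emp_gibbs_loss L p1"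
  assume "\<not> ?thesis"
  then have G_le_min: "ereal G \<le> (INF \<theta>\<in>space prior. neg_log_lik L \<theta>)"
    by (simp add: G_def p1_def not_less)
  have G_le: "G \<le> - ln (L \<theta>)" if "\<theta> \<in> space prior" "L \<theta> \<noteq> 0" for \<theta>
    using order_trans[OF G_le_min INF_lower[OF that(1)]] that(2) by (simp add: neg_log_lik_def)
  have L_nonneg: "L \<theta> \<ge> 0" for \<theta>
    unfolding L_def data_lik_def by (intro prod_nonneg lik_nonneg)
  have L_meas: "L \<in> borel_measurable prior"
    unfolding L_def data_lik_def by (intro borel_measurable_prod lik_meas)
  note AE_p1 = AE_tempered_post[OF L_meas conjunct2[OF proper], of 1, folded p1_def, simplified]
  interpret p1: prob_space p1
    unfolding p1_def using proper[of 1] by (intro prob_space_tempered_post) auto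
  have "AE \<theta> in p1. G \<le> - ln (L \<theta>)"
    unfolding AE_p1 using G_le by (intro AE_I2) auto
  then have "AE \<theta> in p1. - ln (L \<theta>) = G"
    using gibbs_defined by (intro p1.AE_eq_if_integral_le_lower_bound)
      (auto simp: G_def p1_def emp_gibbs_loss_def)
  then have "AE \<theta> in prior. L \<theta> = 0 \<or> L \<theta> = exp (- G)"
    unfolding AE_p1 by eventually_elim (metis L_nonneg exp_ln less_eq_real_def minus_minus)
  then have "(\<lambda>l. bayes_loss \<nu> lik (tempered_post prior L l)) = (\<lambda>_. bayes_loss \<nu> lik p1)"
    unfolding p1_def using L_meas
    by (intro ext arg_cong[where f = "bayes_loss \<nu> lik"] tempered_post_two_valued_lik) auto
  then have "d = 0"
    using cold DERIV_const DERIV_unique by metis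
  with neg show False by simp
qed

end
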